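(* Let $\Lambda,\alpha$ be positive integers with $\alpha\in[\Lambda-1]$ and let $r\in[\Lambda-\alpha]$. For the MADC model with combinatorial topology (CT) having $\Lambda$ mapper nodes, $K=\binom{\Lambda}{\alpha}$ reducer nodes and computation load $r$, the communication load $$L(r,\alpha)=\frac{\binom{\Lambda-\alpha}{r}}{\binom{\Lambda}{r}\left(\binom{r+\alpha}{r}-1\right)}$$ is achievable. (The array $D_{\Lambda,r,\alpha}$, whose rows are the batches $B_T$ and columns the reducer nodes $U$, with $d_{T,U}=*$ exactly when reducer $U$ has access to $B_T$, is a $\binom{r+\alpha}{r}$-regular $\left(\binom{\Lambda}{\alpha},\binom{\Lambda}{r},\binom{\Lambda}{\alpha+r}\right)$ MRA representing this model.)
   Context: Notation: $[0,n)=\{0,1,\dots,n-1\}$, $[n]=\{1,\dots,n\}$. MADC (multi-access distributed computing) model: There are $\Lambda$ mapper nodes indexed by $[0,\Lambda)$ and $K$ reducer nodes. There are $N$ input files $w_0,\dots,w_{N-1}\in\mathbb{F}_{2^d}$ and $Q$ output functions $\phi_q:\mathbb{F}_{2^d}^N\to\mathbb{F}_{2^b}$, $q\in[0,Q)$, of the form $\phi_q(w_0,\dots,w_{N-1})=h_q(v_{q,0},\dots,v_{q,N-1})$, where $v_{q,n}=g_{q,n}(w_n)\in\mathbb{F}_{2^t}$ is called an intermediate value (IV). Each reducer node $k$ is assigned a set $\mathcal W_k\subseteq[0,Q)$ of $Q/K$ output functions, these sets being pairwise disjoint. The files are partitioned into $F$ disjoint batches of $N/F$ files each. Map phase: each mapper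 node $\lambda$ stores a set $M_\lambda$ of batches and computes all IVs $v_{q,n}$, $q\in[0,Q)$, for all files $w_n$ in its stored batches. Each reducer node is connected to a set of mapper nodes and has access to every batch stored at any mapper node it is connected to, together with all IVs computed from those batches. Shuffle phase: each reducer node $k$ broadcasts to all other reducer nodes, error-free, a message $\mathbf X_k$ of $l_k$ bits that is a function of the IVs it has access to. Reduce phase: each reducer node $k$ must recover all IVs $v_{q,n}$ with $q\in\mathcal W_k$, $n\in[0,N)$, from the received messages and the IVs it has access to. The computation load is $r=\sum_{\lambda}|M_\lambda|/F$ and the communication load is $L=\sum_{k}l_k/(QNt)$. A communication load $L$ is achievable for a given model if there exists a shuffle/reduce scheme satisfying all decoding requirements that attains $L$ (for a suitable choice of the number of files per batch, the number of functions per reducer, and the IV length $t$). Combinatorial topology (CT): the files are split into $F=\binom{\Lambda}{r}$ batches $B_T$, one for each $T\subset[0,\Lambda)$ with $|T|=r$; mapper node $\lambda$ stores exactly the batches $B_T$ with $\lambda\in T$; there are $K=\binom{\Lambda}{\alpha}$ reducer nodes, one for each $\alpha$-subset $U\subset[0,\Lambda)$, and reducer node $U$ is connected exactly to the mapper nodes in $U$ (so it has access to $B_T$ iff $T\cap U\neq\emptyset$). $D_{\Lambda,r,\alpha}$: order the $(\alpha+r)$-subsets of $[0,\Lambda)$ lexicographically and let $y_{\alpha+r}(T')$ be the position of $T'$ minus 1; $D_{\Lambda,r,\alpha}$ has rows indexed by $r$-subsets $T$ and columns by $\alpha$-subsets $U$ of $[0,\Lambda)$, with $d_{T,U}=*$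 if $T\cap U\ne\emptyset$ and $d_{T,U}=y_{\alpha+r}(T\cup U)$ otherwise. A $g$-regular $(K,F,S)$ MRA is an $F\times K$ array with entries $*$ or integers in $[0,S)$, each integer occurring exactly $g\ge2$ times, such that two equal integer entries lie in distinct rows $f_1,f_2$ and distinct columns $k_1,k_2$ with $p_{f_1,k_2}=p_{f_2,k_1}=*$. *)

theory Defs
  imports Complex_Main
begin

text \<open>Batches are indexed by the r-subsets T of [0,Lambda); reducer nodes by the
alpha-subsets U of [0,Lambda). Reducer U has access to batch T iff T and U intersect.\<close>

definition ct_batches :: "nat \<Rightarrow> nat \<Rightarrow> nat set set" where
  "ct_batches Lam r = {T. T \<subseteq> {..<Lam} \<and> card T = r}"

definition ct_reducers :: "nat \<Rightarrow> nat \<Rightarrow> nat set set" where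
  "ct_reducers Lam a = {U. U \<subseteq> {..<Lam} \<and> card U = a}"

text \<open>An IV index is ((U,i),(T,j)): the i-th output function assigned to reducer U
(i < p, so Q = K*p) evaluated on the j-th file of batch B_T (j < m, so N = F*m).
An IV value in F_(2^t) is represented by its t bits: an assignment
v :: iv_idx => nat => bool, where only bits b < t are meaningful.\<close>

type_synonym iv_idx = "(nat set \<times> nat) \<times> (nat set \<times> nat)"
type_synonym iv_assign = "iv_idx \<Rightarrow> nat \<Rightarrow> bool"

definition iv_valid :: "nat \<Rightarrow> nat \<Rightarrow> nat \<Rightarrow> nat \<Rightarrow> nat \<Rightarrow> iv_idx \<Rightarrow> bool" where
  "iv_valid Lam r a p m x =
     (case x of ((U', i), (T, j)) \<Rightarrow>
        U' \<in> ct_reducers Lam a \<and> i < p \<and> T \<in> ct_batches Lam r \<and> j < m)"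

definition iv_accessible :: "nat \<Rightarrow> nat \<Rightarrow> nat \<Rightarrow> nat \<Rightarrow> nat \<Rightarrow> nat set \<Rightarrow> iv_idx \<Rightarrow> bool" where
  "iv_accessible Lam r a p m U x =
     (iv_valid Lam r a p m x \<and> fst (snd x) \<inter> U \<noteq> {})"

definition iv_required :: "nat \<Rightarrow> nat \<Rightarrow> nat \<Rightarrow> nat \<Rightarrow> nat \<Rightarrow> nat set \<Rightarrow> iv_idx \<Rightarrow> bool" where
  "iv_required Lam r a p m U x =
     (iv_valid Lam r a p m x \<and> fst (fst x) = U)"

definition iv_view :: "nat \<Rightarrow> nat \<Rightarrow> nat \<Rightarrow> nat \<Rightarrow> nat \<Rightarrow> nat \<Rightarrow> nat set \<Rightarrow> iv_assign \<Rightarrow> iv_assign" where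
  "iv_view Lam r a p m t U v =
     (\<lambda>x b. if iv_accessible Lam r a p m U x \<and> b < t then v x b else False)"

definition madc_ct_achievable :: "nat \<Rightarrow> nat \<Rightarrow> nat \<Rightarrow> real \<Rightarrow> bool" where
  "madc_ct_achievable Lam r a L =
     (\<exists>(p::nat) (m::nat) (t::nat) (l :: nat set \<Rightarrow> nat)
        (enc :: nat set \<Rightarrow> iv_assign \<Rightarrow> bool list)
        (dec :: nat set \<Rightarrow> (nat set \<Rightarrow> bool list) \<Rightarrow> iv_assign \<Rightarrow> iv_assign).
        p > 0 \<and> m > 0 \<and> t > 0 \<and>
        (\<forall>U \<in> ct_reducers Lam a. \<forall>v.
            length (enc U (iv_view Lam r a p m t U v)) = l U) \<and>
        (\<forall>U \<in> ct_reducers Lam a. \<forall>v. \<forall>x b.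
            iv_required Lam r a p m U x \<and> b < t \<longrightarrow>
            dec U (\<lambda>U'. if U' \<in> ct_reducers Lam a \<and> U' \<noteq> U
                         then enc U' (iv_view Lam r a p m t U' v) else [])
                  (iv_view Lam r a p m t U v) x b = v x b) \<and>
        L = real (\<Sum>U \<in> ct_reducers Lam a. l U) /
            (real (card (ct_reducers Lam a) * p) * real (card (ct_batches Lam r) * m) * real t))"

text \<open>An array with rows indexed by R and columns by C; entries None = *, Some s = integer s.
g-regular (K,F,S) MRA: F rows, K columns, entries in {*} \<union> [0,S), each integer in [0,S)
occurs exactly g \<ge> 2 times, and equal integer entries at distinct positions lie in
distinct rows f1,f2 and distinct columns k1,k2 with p(f1,k2) = p(f2,k1) = *.\<close>

definition is_regular_MRA ::
  "nat \<Rightarrow> nat \<Rightarrow> nat \<Rightarrow> nat \<Rightarrow> 'r set \<Rightarrow> 'c set \<Rightarrow> ('r \<Rightarrow> 'c \<Rightarrow> nat option) \<Rightarrow> bool" where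
  "is_regular_MRA g K F S R C P =
     (finite R \<and> finite C \<and> card R = F \<and> card C = K \<and> g \<ge> 2 \<and>
      (\<forall>f\<in>R. \<forall>k\<in>C. \<forall>s. P f k = Some s \<longrightarrow> s < S) \<and>
      (\<forall>s<S. card {(f, k). f \<in> R \<and> k \<in> C \<and> P f k = Some s} = g) \<and>
      (\<forall>f1\<in>R. \<forall>f2\<in>R. \<forall>k1\<in>C. \<forall>k2\<in>C. \<forall>s.
          P f1 k1 = Some s \<and> P f2 k2 = Some s \<and> (f1, k1) \<noteq> (f2, k2) \<longrightarrow>
          f1 \<noteq> f2 \<and> k1 \<noteq> k2 \<and> P f1 k2 = None \<and> P f2 k1 = None))"

text \<open>Position (minus 1) of an n-subset T' of [0,Lambda) in the lexicographic order of
all n-subsets (subsets compared as increasingly sorted lists).\<close>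

definition lex_rank :: "nat \<Rightarrow> nat \<Rightarrow> nat set \<Rightarrow> nat" where
  "lex_rank Lam n T' =
     card {S'. S' \<subseteq> {..<Lam} \<and> card S' = n \<and>
               ord_class.lexordp (sorted_list_of_set S') (sorted_list_of_set T')}"

definition D_entry :: "nat \<Rightarrow> nat \<Rightarrow> nat \<Rightarrow> nat set \<Rightarrow> nat set \<Rightarrow> nat option" where
  "D_entry Lam r a T U =
     (if T \<inter> U \<noteq> {} then None else Some (lex_rank Lam (a + r) (T \<union> U)))"

end

theory Submission imports Defs begin

text \<open>For every (\<alpha>+r)-subset W of the mapper nodes and every \<alpha>-subset U' of W, reducer U'
needs the IV of its function on the file of batch W - U', while every other \<alpha>-subset U of W
has access to that batch. Split each such IV into \<open>binom(r+\<alpha>, r) - 1\<close> bits, one for each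
U \<noteq> U' in W; reducer U then broadcasts, for each W \<supseteq> U, the XOR of the bits it is
responsible for. Each term of that XOR is known to every other \<alpha>-subset of W, so each
transmitted bit delivers one new bit to \<open>binom(r+\<alpha>, r) - 1\<close> reducers at once. With one file
per batch and one function per reducer, reducer U sends \<open>binom(\<Lambda>-\<alpha>, r)\<close> bits, which gives
the load L(r,\<alpha>). The same incidence structure, T \<union> U = W with T \<inter> U = {}, is what makes D a
regular MRA.\<close>

definition k_subsets :: "nat \<Rightarrow> 'a set \<Rightarrow> 'a set set" where
  "k_subsets k W = {U. U \<subseteq> W \<and> card U = k}"

lemma finite_k_subsets: "finite W \<Longrightarrow> finite (k_subsets k W)"
  unfolding k_subsets_def by (rule finite_subset[of _ "Pow W"]) auto

lemma card_k_subsets: "finite W \<Longrightarrow> card (k_subsets k W) = card W choose k"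
  unfolding k_subsets_def by (rule n_subsets)

lemma finite_of_k_subsets: "finite W \<Longrightarrow> U \<in> k_subsets k W \<Longrightarrow> finite U"
  unfolding k_subsets_def by (auto intro: finite_subset)

lemma ct_batches_eq_k_subsets: "ct_batches Lam n = k_subsets n {..<Lam}"
  unfolding ct_batches_def k_subsets_def ..

lemma ct_reducers_eq_k_subsets: "ct_reducers Lam n = k_subsets n {..<Lam}"
  unfolding ct_reducers_def k_subsets_def ..

lemma card_ct_batches: "card (ct_batches Lam n) = Lam choose n"
  by (simp add: ct_batches_eq_k_subsets card_k_subsets)

lemma k_subsets_mono: "W \<subseteq> S \<Longrightarrow> k_subsets k W \<subseteq> k_subsets k S"
  unfolding k_subsets_def by blast

lemma ct_batches_memD:
  assumes "W \<in> ct_batches Lam n"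
  shows "W \<subseteq> {..<Lam}" "finite W" "card W = n"
  using assms finite_subset[OF _ finite_lessThan] by (auto simp: ct_batches_def)

lemma Un_mem_k_subsets:
  assumes "finite W" "T \<in> k_subsets r W" "U \<in> k_subsets a W" "T \<inter> U = {}"
  shows "T \<union> U \<in> k_subsets (a + r) W"
proof -
  have "card (T \<union> U) = card T + card U"
    using finite_of_k_subsets[OF assms(1)] assms(2-4) by (blast intro: card_Un_disjoint)
  then show ?thesis
    using assms(2,3) by (simp add: k_subsets_def)
qed

lemma Diff_mem_k_subsets:
  assumes "finite W" "U \<in> k_subsets a W" "card W = a + r"
  shows "W - U \<in> k_subsets r W"
proof -
  have "card (W - U) = card W - card U"
    using finite_of_k_subsets[OF assms(1,2)] assms(2) by (simp add: k_subsets_def card_Diff_subset)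
  then show ?thesis
    using assms(2,3) by (simp add: k_subsets_def)
qed

lemma card_supersets_in_k_subsets:
  assumes S: "finite S" and U: "U \<in> k_subsets a S"
  shows "card {W \<in> k_subsets (a + r) S. U \<subseteq> W} = (card S - a) choose r"
proof -
  have "{W \<in> k_subsets (a + r) S. U \<subseteq> W} = (\<lambda>T. T \<union> U) ` k_subsets r (S - U)"
  proof (intro equalityI subsetI)
    fix W assume "W \<in> {W \<in> k_subsets (a + r) S. U \<subseteq> W}"
    then have W: "W \<in> k_subsets (a + r) S" "U \<in> k_subsets a W"
      using U by (auto simp: k_subsets_def)
    have "finite W"
      using finite_of_k_subsets[OF S W(1)] .
    then have "W - U \<in> k_subsets r W"
      using W by (intro Diff_mem_k_subsets) (auto simp: k_subsets_def)
    then have "W - U \<in> k_subsets r (S - U)"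
      using W(1) by (auto simp: k_subsets_def)
    moreover have "W = (W - U) \<union> U"
      using W(2) by (auto simp: k_subsets_def)
    ultimately show "W \<in> (\<lambda>T. T \<union> U) ` k_subsets r (S - U)" by blast
  next
    fix W assume "W \<in> (\<lambda>T. T \<union> U) ` k_subsets r (S - U)"
    then obtain T where "W = T \<union> U" "T \<in> k_subsets r (S - U)" by blast
    moreover have "T \<in> k_subsets r S" "T \<inter> U = {}"
      using calculation(2) by (auto simp: k_subsets_def)
    ultimately show "W \<in> {W \<in> k_subsets (a + r) S. U \<subseteq> W}"
      using Un_mem_k_subsets[OF S _ U] by blast
  qed
  moreover have "inj_on (\<lambda>T. T \<union> U) (k_subsets r (S - U))"
    unfolding inj_on_def k_subsets_def by blast
  moreover have "card (S - U) = card S - a"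
    using U finite_of_k_subsets[OF S U] by (simp add: k_subsets_def card_Diff_subset)
  ultimately show ?thesis
    using S by (simp add: card_image card_k_subsets)
qed

lemma binomial_ge_2:
  assumes "0 < k" "k < n"
  shows "2 \<le> n choose k"
proof -
  obtain n' k' where n: "n = Suc n'" and k: "k = Suc k'"
    using assms by (cases n; cases k) auto
  have "0 < n' choose k'" "0 < n' choose k"
    using assms by (simp_all add: n k)
  moreover have "n choose k = (n' choose k') + (n' choose k)"
    by (simp add: n k)
  ultimately show ?thesis by linarith
qed

lemma bij_betw_rank:
  fixes less :: "'a \<Rightarrow> 'a \<Rightarrow> bool"
  assumes fin: "finite A"
    and irrefl: "\<And>x. \<not> less x x"
    and trans: "\<And>x y z. less x y \<Longrightarrow> less y z \<Longrightarrow> less x z"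
    and total: "\<And>x y. x \<in> A \<Longrightarrow> y \<in> A \<Longrightarrow> x \<noteq> y \<Longrightarrow> less x y \<or> less y x"
  shows "bij_betw (\<lambda>x. card {y \<in> A. less y x}) A {..<card A}"
proof -
  define rank where "rank x = card {y \<in> A. less y x}" for x
  have rank_less: "rank x < rank y" if "x \<in> A" "less x y" for x y
  proof -
    have "{z \<in> A. less z x} \<subset> {z \<in> A. less z y}"
      using that irrefl trans by blast
    then show ?thesis
      unfolding rank_def using fin by (simp add: psubset_card_mono)
  qed
  have "inj_on rank A"
    by (rule inj_onI) (metis total rank_less less_irrefl)
  moreover have "rank x < card A" if "x \<in> A" for x
    unfolding rank_def by (rule psubset_card_mono) (use fin that irrefl in auto)
  ultimately have "rank ` A = {..<card A}"
    by (intro card_subset_eq) (auto simp: card_image)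
  with \<open>inj_on rank A\<close> show ?thesis
    unfolding bij_betw_def rank_def by blast
qed

lemma bij_betw_lex_rank:
  "bij_betw (lex_rank Lam n) (ct_batches Lam n) {..<Lam choose n}"
proof -
  have "lex_rank Lam n = (\<lambda>X. card {Y \<in> ct_batches Lam n.
          ord_class.lexordp (sorted_list_of_set Y) (sorted_list_of_set X)})"
    unfolding lex_rank_def ct_batches_def by (simp add: conj_assoc)
  moreover have "bij_betw \<dots> (ct_batches Lam n) {..<card (ct_batches Lam n)}"
  proof (rule bij_betw_rank)
    show "finite (ct_batches Lam n)"
      by (simp add: ct_batches_eq_k_subsets finite_k_subsets)
    show "\<not> ord_class.lexordp xs xs" for xs :: "nat list"
      by (rule lexordp_irreflexive')
    show "ord_class.lexordp xs zs"
      if "ord_class.lexordp xs ys" "ord_class.lexordp ys zs" for xs ys zs :: "nat list"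
      using that by (rule lexordp_trans)
    fix X Y assume "X \<in> ct_batches Lam n" "Y \<in> ct_batches Lam n" "X \<noteq> Y"
    then have "sorted_list_of_set X \<noteq> sorted_list_of_set Y"
      by (metis ct_batches_eq_k_subsets finite_lessThan finite_of_k_subsets
          sorted_list_of_set.set_sorted_key_list_of_set)
    then show "ord_class.lexordp (sorted_list_of_set X) (sorted_list_of_set Y) \<or>
               ord_class.lexordp (sorted_list_of_set Y) (sorted_list_of_set X)"
      using lexordp_linear by blast
  qed
  ultimately show ?thesis by (simp add: card_ct_batches)
qed

section \<open>The array D is a regular MRA\<close>

lemma disjoint_splits_cross:
  assumes "T1 \<union> U1 = T2 \<union> U2" "T1 \<inter> U1 = {}" "T2 \<inter> U2 = {}"
    and "finite T1" "finite T2" "card T1 = card T2" "(T1, U1) \<noteq> (T2, U2)"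
  shows "T1 \<noteq> T2 \<and> U1 \<noteq> U2 \<and> T1 \<inter> U2 \<noteq> {} \<and> T2 \<inter> U1 \<noteq> {}"
proof -
  define W where "W = T1 \<union> U1"
  have U: "U1 = W - T1" "U2 = W - T2" and T: "T1 = W - U1" "T2 = W - U2"
    using assms(1-3) unfolding W_def by auto
  have ne1: "T1 \<noteq> T2"
  proof
    assume "T1 = T2"
    then have "U1 = U2" by (simp add: U)
    with \<open>T1 = T2\<close> assms(7) show False by simp
  qed
  have ne2: "U1 \<noteq> U2"
  proof
    assume "U1 = U2"
    then have "T1 = T2" by (simp add: T)
    with ne1 show False by simp
  qed
  have "\<not> T1 \<subseteq> T2" "\<not> T2 \<subseteq> T1"
    using ne1 card_subset_eq[OF assms(5) _ assms(6)] card_subset_eq[OF assms(4) _ assms(6)[symmetric]]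
    by blast+
  moreover have "T1 \<subseteq> W" "T2 \<subseteq> W"
    using assms(1) unfolding W_def by blast+
  ultimately show ?thesis
    using ne1 ne2 T by blast
qed

lemma Un_mem_ct_batches:
  "T \<in> ct_batches Lam r \<Longrightarrow> U \<in> ct_reducers Lam a \<Longrightarrow> T \<inter> U = {}
    \<Longrightarrow> T \<union> U \<in> ct_batches Lam (a + r)"
  unfolding ct_batches_eq_k_subsets ct_reducers_eq_k_subsets by (simp add: Un_mem_k_subsets)

lemma D_entry_eq_Some_lex_rank_iff:
  assumes "T \<in> ct_batches Lam r" "U \<in> ct_reducers Lam a" "W \<in> ct_batches Lam (a + r)"
  shows "D_entry Lam r a T U = Some (lex_rank Lam (a + r) W) \<longleftrightarrow> T \<inter> U = {} \<and> T \<union> U = W"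
  using assms Un_mem_ct_batches[OF assms(1,2)] bij_betw_imp_inj_on[OF bij_betw_lex_rank]
  unfolding D_entry_def by (auto dest: inj_onD)

lemma D_entry_eq_SomeE:
  assumes "T \<in> ct_batches Lam r" "U \<in> ct_reducers Lam a" "D_entry Lam r a T U = Some s"
  obtains W where "W \<in> ct_batches Lam (a + r)" "s = lex_rank Lam (a + r) W"
    "T \<inter> U = {}" "T \<union> U = W"
  using assms Un_mem_ct_batches[OF assms(1,2)] unfolding D_entry_def
  by (auto split: if_splits)

lemma D_entry_positions:
  assumes W: "W \<in> ct_batches Lam (a + r)"
  shows "{(T, U). T \<in> ct_batches Lam r \<and> U \<in> ct_reducers Lam a \<and>
            D_entry Lam r a T U = Some (lex_rank Lam (a + r) W)}
         = (\<lambda>T. (T, W - T)) ` k_subsets r W"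
proof (intro equalityI subsetI)
  fix x assume "x \<in> {(T, U). T \<in> ct_batches Lam r \<and> U \<in> ct_reducers Lam a \<and>
                    D_entry Lam r a T U = Some (lex_rank Lam (a + r) W)}"
  then obtain T U where x: "x = (T, U)" and T: "T \<in> ct_batches Lam r"
    and U: "U \<in> ct_reducers Lam a" and D: "D_entry Lam r a T U = Some (lex_rank Lam (a + r) W)"
    by blast
  have "T \<inter> U = {}" "T \<union> U = W"
    using D_entry_eq_Some_lex_rank_iff[OF T U W] D by simp_all
  then have "U = W - T" "T \<in> k_subsets r W"
    using ct_batches_memD(3)[OF T] by (auto simp: k_subsets_def)
  then show "x \<in> (\<lambda>T. (T, W - T)) ` k_subsets r W"
    using x by blast
next
  fix x assume "x \<in> (\<lambda>T. (T, W - T)) ` k_subsets r W"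
  then obtain T where x: "x = (T, W - T)" and T: "T \<in> k_subsets r W" by blast
  note W' = ct_batches_memD[OF W]
  have "W - T \<in> k_subsets a W"
    using W' T by (intro Diff_mem_k_subsets) simp_all
  then have "T \<in> ct_batches Lam r" "W - T \<in> ct_reducers Lam a"
    using T k_subsets_mono[OF W'(1)]
    by (auto simp: ct_batches_eq_k_subsets ct_reducers_eq_k_subsets)
  moreover have "T \<inter> (W - T) = {}" "T \<union> (W - T) = W"
    using T by (auto simp: k_subsets_def)
  ultimately show "x \<in> {(T, U). T \<in> ct_batches Lam r \<and> U \<in> ct_reducers Lam a \<and>
                        D_entry Lam r a T U = Some (lex_rank Lam (a + r) W)}"
    using x D_entry_eq_Some_lex_rank_iff[OF _ _ W] by blast
qed

lemma card_D_entry_positions: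
  assumes W: "W \<in> ct_batches Lam (a + r)"
  shows "card {(T, U). T \<in> ct_batches Lam r \<and> U \<in> ct_reducers Lam a \<and>
            D_entry Lam r a T U = Some (lex_rank Lam (a + r) W)} = r + a choose r"
proof -
  note W' = ct_batches_memD[OF W]
  moreover have "inj_on (\<lambda>T. (T, W - T)) (k_subsets r W)"
    by (auto intro: inj_onI)
  ultimately show ?thesis
    unfolding D_entry_positions[OF W] by (simp add: card_image card_k_subsets add.commute)
qed

lemma D_entry_same_value:
  assumes T: "T1 \<in> ct_batches Lam r" "T2 \<in> ct_batches Lam r"
    and U: "U1 \<in> ct_reducers Lam a" "U2 \<in> ct_reducers Lam a"
    and s: "D_entry Lam r a T1 U1 = Some s" "D_entry Lam r a T2 U2 = Some s"
    and ne: "(T1, U1) \<noteq> (T2, U2)"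
  shows "T1 \<noteq> T2 \<and> U1 \<noteq> U2 \<and> D_entry Lam r a T1 U2 = None \<and> D_entry Lam r a T2 U1 = None"
proof -
  obtain W1 where W1: "W1 \<in> ct_batches Lam (a + r)" "s = lex_rank Lam (a + r) W1"
    and "T1 \<inter> U1 = {}" "T1 \<union> U1 = W1"
    by (rule D_entry_eq_SomeE[OF T(1) U(1) s(1)])
  moreover obtain W2 where W2: "W2 \<in> ct_batches Lam (a + r)" "s = lex_rank Lam (a + r) W2"
    and "T2 \<inter> U2 = {}" "T2 \<union> U2 = W2"
    by (rule D_entry_eq_SomeE[OF T(2) U(2) s(2)])
  moreover have "W1 = W2"
    using inj_onD[OF bij_betw_imp_inj_on[OF bij_betw_lex_rank]] W1 W2 by metis
  moreover have "finite T1" "finite T2" "card T1 = card T2"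
    using ct_batches_memD[OF T(1)] ct_batches_memD[OF T(2)] by simp_all
  ultimately have "T1 \<noteq> T2 \<and> U1 \<noteq> U2 \<and> T1 \<inter> U2 \<noteq> {} \<and> T2 \<inter> U1 \<noteq> {}"
    using disjoint_splits_cross[OF _ _ _ _ _ _ ne] by simp
  then show ?thesis
    by (simp add: D_entry_def)
qed

theorem is_regular_MRA_D_entry:
  assumes "0 < a" "0 < r"
  shows "is_regular_MRA (r + a choose r) (Lam choose a) (Lam choose r) (Lam choose (a + r))
           (ct_batches Lam r) (ct_reducers Lam a) (D_entry Lam r a)"
proof -
  let ?rank = "lex_rank Lam (a + r)"
  have rank: "bij_betw ?rank (ct_batches Lam (a + r)) {..<Lam choose (a + r)}"
    by (rule bij_betw_lex_rank)
  have entries: "s < Lam choose (a + r)"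
    if D: "T \<in> ct_batches Lam r" "U \<in> ct_reducers Lam a" "D_entry Lam r a T U = Some s"
    for T U s
  proof -
    obtain W where "W \<in> ct_batches Lam (a + r)" "s = ?rank W" "T \<inter> U = {}" "T \<union> U = W"
      by (rule D_entry_eq_SomeE[OF D])
    then show ?thesis
      using bij_betwE[OF rank] by auto
  qed
  have counts: "card {(T, U). T \<in> ct_batches Lam r \<and> U \<in> ct_reducers Lam a \<and>
                 D_entry Lam r a T U = Some s} = r + a choose r"
    if "s < Lam choose (a + r)" for s
  proof -
    have "s \<in> ?rank ` ct_batches Lam (a + r)"
      using that bij_betw_imp_surj_on[OF rank] by simp
    then obtain W where "W \<in> ct_batches Lam (a + r)" "s = ?rank W" by blast
    then show ?thesis by (simp add: card_D_entry_positions)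
  qed
  show ?thesis
    unfolding is_regular_MRA_def
  proof (intro conjI)
    show "finite (ct_batches Lam r)" "finite (ct_reducers Lam a)"
      by (simp_all add: ct_batches_eq_k_subsets ct_reducers_eq_k_subsets finite_k_subsets)
    show "card (ct_batches Lam r) = Lam choose r" "card (ct_reducers Lam a) = Lam choose a"
      by (simp_all add: card_ct_batches ct_reducers_eq_k_subsets card_k_subsets)
    show "2 \<le> r + a choose r"
      using assms by (simp add: binomial_ge_2)
  qed (use entries counts D_entry_same_value in blast)+
qed

section \<open>A coded shuffle scheme achieving the load\<close>

definition parity :: "'a set \<Rightarrow> ('a \<Rightarrow> bool) \<Rightarrow> bool" where
  "parity S f = odd (card {y \<in> S. f y})"

lemma parity_remove:
  assumes "finite S" "y \<in> S"
  shows "parity S f = (f y \<noteq> parity (S - {y}) f)"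
proof (cases "f y")
  case True
  then have "{z \<in> S. f z} = insert y {z \<in> S - {y}. f z}"
    using assms(2) by blast
  then show ?thesis
    using assms(1) True by (simp add: parity_def)
next
  case False
  then have "{z \<in> S. f z} = {z \<in> S - {y}. f z}"
    by blast
  then show ?thesis
    using False by (simp add: parity_def)
qed

lemma parity_cong: "(\<And>y. y \<in> S \<Longrightarrow> f y = g y) \<Longrightarrow> parity S f = parity S g"
  unfolding parity_def by (metis (mono_tags, lifting) Collect_cong)

text \<open>The scheme uses one function per reducer and one file per batch, so the IV of reducer U'
on batch W - U' is the only one involving U' and the (\<alpha>+r)-set W; its bits are indexed by the
other \<alpha>-subsets U of W, bit \<open>bit_slot a W U' U\<close> being the one that U helps to deliver.\<close>

definition coded_iv :: "nat set \<Rightarrow> nat set \<Rightarrow> iv_idx" where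
  "coded_iv W U = ((U, 0), (W - U, 0))"

definition bit_slot :: "nat \<Rightarrow> nat set \<Rightarrow> nat set \<Rightarrow> nat set \<Rightarrow> nat" where
  "bit_slot a W U' =
     (SOME h. bij_betw h (k_subsets a W - {U'}) {..<card (k_subsets a W - {U'})})"

definition coded_bit :: "nat \<Rightarrow> nat set \<Rightarrow> iv_assign \<Rightarrow> nat set \<Rightarrow> bool" where
  "coded_bit a U v W = parity (k_subsets a W - {U}) (\<lambda>U'. v (coded_iv W U') (bit_slot a W U' U))"

definition supersets_list :: "nat \<Rightarrow> nat \<Rightarrow> nat set \<Rightarrow> nat set list" where
  "supersets_list Lam n U = (SOME xs. set xs = {W \<in> ct_batches Lam n. U \<subseteq> W} \<and> distinct xs)"

definition list_pos :: "'a list \<Rightarrow> 'a \<Rightarrow> nat" where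
  "list_pos xs y = (SOME i. i < length xs \<and> xs ! i = y)"

definition transmitter :: "nat \<Rightarrow> nat set \<Rightarrow> nat set \<Rightarrow> nat \<Rightarrow> nat set" where
  "transmitter a W U' = inv_into (k_subsets a W - {U'}) (bit_slot a W U')"

definition encode :: "nat \<Rightarrow> nat \<Rightarrow> nat \<Rightarrow> nat set \<Rightarrow> iv_assign \<Rightarrow> bool list" where
  "encode Lam r a U v = map (coded_bit a U v) (supersets_list Lam (a + r) U)"

definition decode ::
  "nat \<Rightarrow> nat \<Rightarrow> nat \<Rightarrow> nat set \<Rightarrow> (nat set \<Rightarrow> bool list) \<Rightarrow> iv_assign \<Rightarrow> iv_assign" where
  "decode Lam r a U' M w x b =
     (let T = fst (snd x) in
      if T \<inter> U' \<noteq> {} then w x b else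
      let W = T \<union> U'; U = transmitter a W U' b in
        M U ! list_pos (supersets_list Lam (a + r) U) W \<noteq>
          parity (k_subsets a W - {U, U'}) (\<lambda>U''. w (coded_iv W U'') (bit_slot a W U'' U)))"

lemma bij_betw_bit_slot:
  assumes "finite W"
  shows "bij_betw (bit_slot a W U') (k_subsets a W - {U'}) {..<card (k_subsets a W - {U'})}"
proof -
  have "finite (k_subsets a W - {U'})"
    using assms by (simp add: finite_k_subsets)
  from ex_bij_betw_finite_nat[OF this] show ?thesis
    unfolding bit_slot_def atLeast0LessThan by (rule someI_ex)
qed

lemma supersets_list:
  "set (supersets_list Lam n U) = {W \<in> ct_batches Lam n. U \<subseteq> W} \<and> distinct (supersets_list Lam n U)"
proof -
  have "finite {W \<in> ct_batches Lam n. U \<subseteq> W}"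
    by (simp add: ct_batches_eq_k_subsets finite_k_subsets)
  from finite_distinct_list[OF this] show ?thesis
    unfolding supersets_list_def by (rule someI_ex)
qed

lemma length_supersets_list:
  assumes "U \<in> ct_reducers Lam a"
  shows "length (supersets_list Lam (a + r) U) = (Lam - a) choose r"
proof -
  have "length (supersets_list Lam (a + r) U) = card {W \<in> ct_batches Lam (a + r). U \<subseteq> W}"
    using supersets_list[of Lam "a + r" U] distinct_card by metis
  also have "\<dots> = (Lam - a) choose r"
    using card_supersets_in_k_subsets[of "{..<Lam}" U a r] assms
    by (simp add: ct_batches_eq_k_subsets ct_reducers_eq_k_subsets)
  finally show ?thesis .
qed

lemma list_pos: "y \<in> set xs \<Longrightarrow> list_pos xs y < length xs \<and> xs ! list_pos xs y = y"
  unfolding list_pos_def by (rule someI_ex) (simp add: in_set_conv_nth)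

lemma card_k_subsets_remove:
  assumes "W \<in> ct_batches Lam (a + r)" "U \<in> k_subsets a W"
  shows "card (k_subsets a W - {U}) = (r + a choose r) - 1"
proof -
  have "card (k_subsets a W) = (a + r) choose a"
    using ct_batches_memD[OF assms(1)] by (simp add: card_k_subsets)
  also have "\<dots> = r + a choose r"
    by (metis add.commute binomial_symmetric le_add2 add_diff_cancel_right')
  finally show ?thesis
    using assms ct_batches_memD[OF assms(1)] by (simp add: finite_k_subsets)
qed

lemma bit_slot_less:
  assumes W: "W \<in> ct_batches Lam (a + r)"
    and U: "U \<in> k_subsets a W" "U' \<in> k_subsets a W" "U \<noteq> U'"
  shows "bit_slot a W U' U < (r + a choose r) - 1"
proof -
  have "U \<in> k_subsets a W - {U'}"
    using U by blast
  then have "bit_slot a W U' U \<in> {..<card (k_subsets a W - {U'})}"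
    using bij_betwE[OF bij_betw_bit_slot[OF ct_batches_memD(2)[OF W], of a U']] by blast
  then show ?thesis
    using card_k_subsets_remove[OF W U(2)] by simp
qed

lemma transmitter:
  assumes W: "W \<in> ct_batches Lam (a + r)" and U': "U' \<in> k_subsets a W"
    and b: "b < (r + a choose r) - 1"
  shows "transmitter a W U' b \<in> k_subsets a W - {U'}" "bit_slot a W U' (transmitter a W U' b) = b"
proof -
  note slot = bij_betw_bit_slot[OF ct_batches_memD(2)[OF W], of a U']
  have "b \<in> bit_slot a W U' ` (k_subsets a W - {U'})"
    using b card_k_subsets_remove[OF W U'] bij_betw_imp_surj_on[OF slot] by simp
  then show "transmitter a W U' b \<in> k_subsets a W - {U'}" "bit_slot a W U' (transmitter a W U' b) = b"
    unfolding transmitter_def by (rule inv_into_into, rule f_inv_into_f)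
qed

lemma coded_iv_accessible:
  assumes W: "W \<in> ct_batches Lam (a + r)"
    and U: "U \<in> k_subsets a W" "U' \<in> k_subsets a W" "U \<noteq> U'"
  shows "iv_accessible Lam r a 1 1 U (coded_iv W U')"
proof -
  note W' = ct_batches_memD[OF W]
  have "W - U' \<in> k_subsets r W"
    using W' U(2) by (intro Diff_mem_k_subsets) simp_all
  then have "U' \<in> ct_reducers Lam a" "W - U' \<in> ct_batches Lam r"
    using U(2) k_subsets_mono[OF W'(1)]
    by (auto simp: ct_batches_eq_k_subsets ct_reducers_eq_k_subsets)
  then have valid: "iv_valid Lam r a 1 1 (coded_iv W U')"
    by (simp add: iv_valid_def coded_iv_def)
  have "U \<subseteq> W" "U' \<subseteq> W" "card U = card U'"
    using U(1,2) by (simp_all add: k_subsets_def)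
  have "(W - U') \<inter> U \<noteq> {}"
  proof
    assume "(W - U') \<inter> U = {}"
    with \<open>U \<subseteq> W\<close> have "U \<subseteq> U'" by blast
    then show False
      using card_subset_eq[OF finite_subset[OF \<open>U' \<subseteq> W\<close> W'(2)] _ \<open>card U = card U'\<close>] U(3)
      by blast
  qed
  with valid show ?thesis
    by (simp add: iv_accessible_def coded_iv_def)
qed

lemma coded_bit_iv_view:
  assumes W: "W \<in> ct_batches Lam (a + r)" and U: "U \<in> k_subsets a W"
  shows "coded_bit a U (iv_view Lam r a 1 1 ((r + a choose r) - 1) U v) W = coded_bit a U v W"
  unfolding coded_bit_def
proof (rule parity_cong)
  fix U' assume "U' \<in> k_subsets a W - {U}"
  then have "U' \<in> k_subsets a W" "U \<noteq> U'" by auto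
  then show "iv_view Lam r a 1 1 ((r + a choose r) - 1) U v (coded_iv W U') (bit_slot a W U' U)
             = v (coded_iv W U') (bit_slot a W U' U)"
    using coded_iv_accessible[OF W U] bit_slot_less[OF W U] by (simp add: iv_view_def)
qed

lemma encode_nth_list_pos:
  assumes W: "W \<in> ct_batches Lam (a + r)" and U: "U \<in> k_subsets a W"
  shows "encode Lam r a U (iv_view Lam r a 1 1 ((r + a choose r) - 1) U v)
           ! list_pos (supersets_list Lam (a + r) U) W = coded_bit a U v W"
proof -
  have "W \<in> set (supersets_list Lam (a + r) U)"
    using supersets_list[of Lam "a + r" U] W U by (auto simp: k_subsets_def)
  then show ?thesis
    using list_pos[of W] coded_bit_iv_view[OF W U] by (simp add: encode_def)
qed

lemma coded_bit_decompose:
  assumes W: "W \<in> ct_batches Lam (a + r)"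
    and U: "U \<in> k_subsets a W" "U' \<in> k_subsets a W" "U \<noteq> U'"
  shows "coded_bit a U v W =
           (v (coded_iv W U') (bit_slot a W U' U) \<noteq>
            parity (k_subsets a W - {U, U'})
              (\<lambda>U''. iv_view Lam r a 1 1 ((r + a choose r) - 1) U' v (coded_iv W U'') (bit_slot a W U'' U)))"
proof -
  have "coded_bit a U v W = (v (coded_iv W U') (bit_slot a W U' U) \<noteq>
          parity (k_subsets a W - {U, U'}) (\<lambda>U''. v (coded_iv W U'') (bit_slot a W U'' U)))"
    unfolding coded_bit_def
    using parity_remove[of "k_subsets a W - {U}" U' "\<lambda>U''. v (coded_iv W U'') (bit_slot a W U'' U)"]
      finite_k_subsets[OF ct_batches_memD(2)[OF W]] U
    by (simp add: Diff_insert2[symmetric])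
  also have "parity (k_subsets a W - {U, U'}) (\<lambda>U''. v (coded_iv W U'') (bit_slot a W U'' U))
      = parity (k_subsets a W - {U, U'})
          (\<lambda>U''. iv_view Lam r a 1 1 ((r + a choose r) - 1) U' v (coded_iv W U'') (bit_slot a W U'' U))"
  proof (rule parity_cong)
    fix U'' assume "U'' \<in> k_subsets a W - {U, U'}"
    then have "U'' \<in> k_subsets a W" "U \<noteq> U''" "U' \<noteq> U''"
      by auto
    then show "v (coded_iv W U'') (bit_slot a W U'' U) =
        iv_view Lam r a 1 1 ((r + a choose r) - 1) U' v (coded_iv W U'') (bit_slot a W U'' U)"
      using coded_iv_accessible[OF W U(2)] bit_slot_less[OF W U(1)] by (simp add: iv_view_def)
  qed
  finally show ?thesis .
qed

lemma decode_correct: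
  assumes U': "U' \<in> ct_reducers Lam a" and x: "iv_required Lam r a 1 1 U' x"
    and b: "b < (r + a choose r) - 1"
  shows "decode Lam r a U'
           (\<lambda>U. if U \<in> ct_reducers Lam a \<and> U \<noteq> U'
                then encode Lam r a U (iv_view Lam r a 1 1 ((r + a choose r) - 1) U v) else [])
           (iv_view Lam r a 1 1 ((r + a choose r) - 1) U' v) x b = v x b"
    (is "decode Lam r a U' ?M (?view U') x b = _")
proof -
  obtain T where x_eq: "x = ((U', 0), (T, 0))" and T: "T \<in> ct_batches Lam r"
    using x by (auto simp: iv_required_def iv_valid_def split: prod.splits)
  show ?thesis
  proof (cases "T \<inter> U' = {}")
    case False
    then have "iv_accessible Lam r a 1 1 U' x"
      using x by (simp add: iv_accessible_def iv_required_def x_eq)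
    then show ?thesis
      using False b by (simp add: decode_def x_eq iv_view_def)
  next
    case True
    define W where "W = T \<union> U'"
    have W: "W \<in> ct_batches Lam (a + r)"
      unfolding W_def using Un_mem_ct_batches[OF T U' True] .
    have U'W: "U' \<in> k_subsets a W"
      using U' by (auto simp: W_def k_subsets_def ct_reducers_eq_k_subsets)
    have x_coded: "x = coded_iv W U'"
      using True by (auto simp: x_eq coded_iv_def W_def)
    define U where "U = transmitter a W U' b"
    have U: "U \<in> k_subsets a W" "U \<noteq> U'" and slot_U: "bit_slot a W U' U = b"
      using transmitter[OF W U'W b] unfolding U_def by simp_all
    have "U \<in> ct_reducers Lam a"
      using U(1) k_subsets_mono[OF ct_batches_memD(1)[OF W]] by (auto simp: ct_reducers_eq_k_subsets)
    then have "?M U ! list_pos (supersets_list Lam (a + r) U) W = coded_bit a U v W"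
      using U encode_nth_list_pos[OF W U(1)] by simp
    also have "\<dots> = (v x b \<noteq> parity (k_subsets a W - {U, U'})
                       (\<lambda>U''. ?view U' (coded_iv W U'') (bit_slot a W U'' U)))"
      using coded_bit_decompose[OF W U(1) U'W U(2)] slot_U x_coded by simp
    finally have "?M U ! list_pos (supersets_list Lam (a + r) U) W =
        (v x b \<noteq> parity (k_subsets a W - {U, U'})
                    (\<lambda>U''. ?view U' (coded_iv W U'') (bit_slot a W U'' U)))" .
    moreover have "decode Lam r a U' ?M (?view U') x b =
        (?M U ! list_pos (supersets_list Lam (a + r) U) W \<noteq> parity (k_subsets a W - {U, U'})
           (\<lambda>U''. ?view U' (coded_iv W U'') (bit_slot a W U'' U)))"
      unfolding decode_def x_eq Let_def fst_conv snd_conv W_def[symmetric] U_def[symmetric]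
      using True by simp
    ultimately show ?thesis
      by blast
  qed
qed

theorem madc_ct_achievable_coded:
  assumes "0 < a" "0 < r" "a \<le> Lam"
  shows "madc_ct_achievable Lam r a
           (real (Lam - a choose r) / (real (Lam choose r) * (real (r + a choose r) - 1)))"
proof -
  let ?t = "(r + a choose r) - 1"
  have "2 \<le> r + a choose r"
    using assms by (simp add: binomial_ge_2)
  then have t: "0 < ?t" "real ?t = real (r + a choose r) - 1"
    by (simp_all add: of_nat_diff)
  have K: "card (ct_reducers Lam a) = Lam choose a" "0 < Lam choose a"
    using assms by (simp_all add: ct_reducers_eq_k_subsets card_k_subsets)
  have "real (Lam - a choose r) / (real (Lam choose r) * (real (r + a choose r) - 1))
     = real (\<Sum>U \<in> ct_reducers Lam a. Lam - a choose r) /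
       (real (card (ct_reducers Lam a) * 1) * real (card (ct_batches Lam r) * 1) * real ?t)"
    unfolding t(2) using K by (simp add: card_ct_batches)
  moreover have "length (encode Lam r a U w) = Lam - a choose r" if "U \<in> ct_reducers Lam a" for U w
    using length_supersets_list[OF that] by (simp add: encode_def)
  ultimately show ?thesis
    unfolding madc_ct_achievable_def
    using t decode_correct
    by (intro exI[of _ 1] exI[of _ ?t] exI[of _ "\<lambda>_. Lam - a choose r"] exI[of _ "encode Lam r a"]
        exI[of _ "decode Lam r a"]) auto
qed

theorem theorem4:
  fixes Lam a r :: nat
  assumes "Lam > 0" and "1 \<le> a" and "a \<le> Lam - 1"
    and "1 \<le> r" and "r \<le> Lam - a"
  shows "madc_ct_achievable Lam r a
           (real (Lam - a choose r) /
            (real (Lam choose r) * (real (r + a choose r) - 1)))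
         \<and> is_regular_MRA (r + a choose r) (Lam choose a) (Lam choose r) (Lam choose (a + r))
             (ct_batches Lam r) (ct_reducers Lam a) (D_entry Lam r a)"
  using assms madc_ct_achievable_coded[of a r Lam] is_regular_MRA_D_entry[of a r Lam] by simp

end
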